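(* Let $(X,d)$ be a compact metric space and $f_{1,\infty}=\{f_n\}$ a sequence of continuous surjective maps $f_n:X\to X$ converging uniformly to $f:X\to X$, such that $\{f_n^k\}_{k\in\mathbb{N}}$ converges collectively to $\{f^k\}_{k\in\mathbb{N}}$ and $f_{1,\infty}$ is feebly open. Then $(X,f_{1,\infty})$ is strongly multi-sensitive if and only if $(X,f)$ is strongly multi-sensitive; and $(X,f_{1,\infty})$ is $\mathcal{N}$-sensitive if and only if $(X,f)$ is $\mathcal{N}$-sensitive.
   Context: Write $f_i^n=f_{n+i-1}\circ\cdots\circ f_i$, $f_i^0=\mathrm{id}$; an autonomous system $(X,f)$ is the case $f_n=f$ for all $n$ (so $f_i^n=f^n$). Collective convergence: for every $\epsilon>0$ there is $N_0\in\mathbb{N}$ such that $D(f_N^k,f^k)<\epsilon$ for all $N\ge N_0$ and all $k\in\mathbb{N}$, where $D$ is the supremum metric on continuous self-maps of $X$. Feebly open: $\mathrm{int}(f_n(U))\ne\varnothing$ for every nonempty open $U\subseteq X$ and every $n$. $f_{1,\infty}^{[k]}=\{f^k_{k(n-1)+1}\}_{n=1}^\infty$ (its $n$-fold composition from index $1$ is $f_1^{kn}$). $N_{f_{1,\infty}}(V,\delta)=\{n\in\mathbb{N}:\exists u,v\in V,\ d(f_1^n(u),f_1^n(v))>\delta\}$. For $\mathbf{v}=(v_1,\dots,v_r)\in\mathbb{N}^r$, the system is multi-sensitive with respect to $\mathbf{v}$ if there is $\delta>0$ such that $\bigcap_{i=1}^r N_{f_{1,\infty}^{[v_i]}}(U_i,\delta)\ne\varnothing$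 for all nonempty open $U_1,\dots,U_r$; $\mathcal{N}$-sensitive if multi-sensitive with respect to $(1,\dots,n)$ for every $n$; strongly multi-sensitive if multi-sensitive with respect to every vector in $\mathbb{N}^r$, for every $r$. *)

theory Defs
  imports "HOL-Analysis.Analysis"
begin

text \<open>Nonautonomous compositions, indexed from 1:
  ncomp fs i n = f_{i+n-1} o ... o f_i,  ncomp fs i 0 = id.\<close>
fun ncomp :: "(nat \<Rightarrow> 'a \<Rightarrow> 'a) \<Rightarrow> nat \<Rightarrow> nat \<Rightarrow> 'a \<Rightarrow> 'a" where
  "ncomp fs i 0 = id"
| "ncomp fs i (Suc n) = fs (i + n) \<circ> ncomp fs i n"

definition supdist :: "'a::metric_space set \<Rightarrow> ('a \<Rightarrow> 'a) \<Rightarrow> ('a \<Rightarrow> 'a) \<Rightarrow> real" where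
  "supdist X g h = (SUP x\<in>X. dist (g x) (h x))"

definition Nset :: "(nat \<Rightarrow> 'a::metric_space \<Rightarrow> 'a) \<Rightarrow> 'a set \<Rightarrow> real \<Rightarrow> nat set" where
  "Nset F V \<delta> = {n. n \<ge> 1 \<and> (\<exists>u\<in>V. \<exists>v\<in>V. dist (F n u) (F n v) > \<delta>)}"

text \<open>Multi-sensitivity w.r.t. a vector vs (entries positive); F n is the n-fold
  composition from index 1, so the k-th power system f^[k] has n-fold composition F (k*n).\<close>
definition multi_sensitive :: "'a::metric_space set \<Rightarrow> (nat \<Rightarrow> 'a \<Rightarrow> 'a) \<Rightarrow> nat list \<Rightarrow> bool" where
  "multi_sensitive X F vs \<longleftrightarrow>
     (\<exists>\<delta>>0. \<forall>Us::'a set list. length Us = length vs \<longrightarrow>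
        (\<forall>U\<in>set Us. openin (top_of_set X) U \<and> U \<noteq> {}) \<longrightarrow>
        (\<Inter>i<length vs. Nset (\<lambda>n. F (vs ! i * n)) (Us ! i) \<delta>) \<noteq> {})"

definition strongly_multi_sensitive :: "'a::metric_space set \<Rightarrow> (nat \<Rightarrow> 'a \<Rightarrow> 'a) \<Rightarrow> bool" where
  "strongly_multi_sensitive X F \<longleftrightarrow>
     (\<forall>vs. vs \<noteq> [] \<longrightarrow> (\<forall>k\<in>set vs. k \<ge> 1) \<longrightarrow> multi_sensitive X F vs)"

definition N_sensitive :: "'a::metric_space set \<Rightarrow> (nat \<Rightarrow> 'a \<Rightarrow> 'a) \<Rightarrow> bool" where
  "N_sensitive X F \<longleftrightarrow> (\<forall>n\<ge>1. multi_sensitive X F [1..<n+1])"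

definition feebly_open :: "'a::metric_space set \<Rightarrow> (nat \<Rightarrow> 'a \<Rightarrow> 'a) \<Rightarrow> bool" where
  "feebly_open X fs \<longleftrightarrow>
     (\<forall>n\<ge>1. \<forall>U. openin (top_of_set X) U \<and> U \<noteq> {} \<longrightarrow>
        (top_of_set X) interior_of (fs n ` U) \<noteq> {})"

end

theory Submission
  imports Defs
begin

text \<open>Collective convergence means that for large s every tail f_{s+1}^m of the
  nonautonomous system stays \<delta>/4-close to f^m, uniformly in m. So a pair of points that
  one system separates by \<delta> after the first s steps is separated by the other system by
  \<delta>/2. To move open sets past the first s steps one uses, in one direction, feeble openness
  (f_1^s U has interior, whose f^s-preimage is open and nonempty) and, in the other,
  continuity and surjectivity (preimages of U under f_1^s and f^{s(k-1)}). After shrinking the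
  open set so that no map of time at most the initial segment separates it, every separation
  time exceeds the initial segment. The time shift involved (none, resp. n \<mapsto> n - s) does
  not depend on the entry k of the vector, so one common time serves all entries at once.\<close>

lemma ncomp_add: "ncomp fs i (m + k) = ncomp fs (i + m) k \<circ> ncomp fs i m"
  by (induction k) (auto simp: add.assoc)

lemma ncomp_const: "ncomp (\<lambda>_. f) i k = f ^^ k"
  by (induction k) auto

lemma ncomp_continuous_surj:
  assumes "\<And>n. n \<ge> i \<Longrightarrow> continuous_on X (fs n) \<and> fs n ` X = X"
  shows "continuous_on X (ncomp fs i k) \<and> ncomp fs i k ` X = X"
proof (induction k)
  case 0
  then show ?case by simp
next
  case (Suc k)
  have "continuous_on X (fs (i + k)) \<and> fs (i + k) ` X = X"
    using assms by simp
  with Suc show ?case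
    by (metis continuous_on_compose image_comp ncomp.simps(2))
qed

lemma funpow_continuous_surj:
  assumes "continuous_on X f" "f ` X = X"
  shows "continuous_on X (f ^^ k) \<and> (f ^^ k) ` X = X"
  using ncomp_continuous_surj[of 0 X "\<lambda>_. f"] assms by (simp add: ncomp_const)

lemma uniform_limit_image_supset:
  assumes "compact X" "continuous_on X l" "uniform_limit X g l F" "F \<noteq> bot"
    and "\<forall>\<^sub>F n in F. Y \<subseteq> g n ` X"
  shows "Y \<subseteq> l ` X"
proof
  fix y assume "y \<in> Y"
  have "y \<in> closure (l ` X)"
    unfolding closure_approachable
  proof (intro allI impI)
    fix e :: real assume "e > 0"
    then have "\<forall>\<^sub>F n in F. (\<forall>x\<in>X. dist (g n x) (l x) < e) \<and> Y \<subseteq> g n ` X"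
      using assms(3,5) unfolding uniform_limit_iff by (simp add: eventually_conj)
    then obtain n where n: "\<forall>x\<in>X. dist (g n x) (l x) < e" "Y \<subseteq> g n ` X"
      using eventually_happens'[OF \<open>F \<noteq> bot\<close>] by blast
    then obtain x where "x \<in> X" "y = g n x"
      using \<open>y \<in> Y\<close> by blast
    with n show "\<exists>z\<in>l ` X. dist z y < e"
      by (metis dist_commute image_eqI)
  qed
  moreover have "closed (l ` X)"
    using assms(1,2) by (simp add: compact_continuous_image compact_imp_closed)
  ultimately show "y \<in> l ` X"
    by (simp add: closure_closed)
qed

lemma dist_le_supdist:
  assumes "bounded Y" "g ` X \<subseteq> Y" "h ` X \<subseteq> Y" "x \<in> X"
  shows "dist (g x) (h x) \<le> supdist X g h"
proof -
  obtain B where "\<forall>a\<in>Y. \<forall>b\<in>Y. dist a b \<le> B"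
    using assms(1) unfolding bounded_two_points by blast
  then have "bdd_above ((\<lambda>x. dist (g x) (h x)) ` X)"
    using assms(2,3) by (intro bdd_aboveI2) blast
  then show ?thesis
    unfolding supdist_def using assms(4) by (rule cSUP_upper[rotated])
qed

lemma collective_convergence_tail:
  assumes "compact X" "\<And>n. n \<ge> 1 \<Longrightarrow> continuous_on X (fs n) \<and> fs n ` X = X"
    and "continuous_on X f" "f ` X = X"
    and "\<forall>e>0. \<exists>N0. \<forall>N\<ge>N0. N \<ge> 1 \<longrightarrow> (\<forall>k. supdist X (ncomp fs N k) (f ^^ k) < e)"
    and "e > 0"
  shows "\<exists>s. \<forall>m. \<forall>x\<in>X. dist (ncomp fs (Suc s) m x) ((f ^^ m) x) < e"
proof -
  obtain s where "\<forall>N\<ge>s. N \<ge> 1 \<longrightarrow> (\<forall>k. supdist X (ncomp fs N k) (f ^^ k) < e)"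
    using assms(5,6) by blast
  then have s: "\<forall>m. supdist X (ncomp fs (Suc s) m) (f ^^ m) < e"
    by simp
  have "dist (ncomp fs (Suc s) m x) ((f ^^ m) x) < e" if "x \<in> X" for m x
  proof -
    have "ncomp fs (Suc s) m ` X = X" "(f ^^ m) ` X = X"
      using ncomp_continuous_surj[of "Suc s" X fs] assms(2) funpow_continuous_surj[OF assms(3,4)]
      by auto
    then have "dist (ncomp fs (Suc s) m x) ((f ^^ m) x) \<le> supdist X (ncomp fs (Suc s) m) (f ^^ m)"
      using compact_imp_bounded[OF assms(1)] \<open>x \<in> X\<close> by (intro dist_le_supdist) auto
    with s show ?thesis
      by (meson order_le_less_trans)
  qed
  then show ?thesis
    by blast
qed

lemma openin_vimage_surj:
  assumes "continuous_on X g" "g ` X = X" "openin (top_of_set X) U" "U \<noteq> {}"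
  shows "openin (top_of_set X) (X \<inter> g -` U) \<and> X \<inter> g -` U \<noteq> {}"
proof
  show "openin (top_of_set X) (X \<inter> g -` U)"
    using assms(1-3) by (intro continuous_openin_preimage) auto
  have "U \<subseteq> g ` X"
    using assms(2,3) openin_subset by force
  with assms(4) show "X \<inter> g -` U \<noteq> {}"
    by blast
qed

lemma interior_of_ncomp_image_nonempty:
  assumes "feebly_open X fs" "openin (top_of_set X) U" "U \<noteq> {}"
  shows "top_of_set X interior_of (ncomp fs 1 k ` U) \<noteq> {}"
proof (induction k)
  case 0
  then show ?case
    using assms(2,3) by (simp add: interior_of_openin)
next
  case (Suc k)
  let ?W = "top_of_set X interior_of (ncomp fs 1 k ` U)"
  have "top_of_set X interior_of (fs (Suc k) ` ?W) \<noteq> {}"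
    using assms(1) Suc.IH unfolding feebly_open_def by (simp add: openin_interior_of)
  moreover have "fs (Suc k) ` ?W \<subseteq> ncomp fs 1 (Suc k) ` U"
    using interior_of_subset by fastforce
  ultimately show ?case
    using interior_of_mono by blast
qed

definition separates :: "('a \<Rightarrow> 'b::metric_space) \<Rightarrow> 'a set \<Rightarrow> real \<Rightarrow> bool" where
  "separates g V \<delta> \<longleftrightarrow> (\<exists>u\<in>V. \<exists>v\<in>V. dist (g u) (g v) > \<delta>)"

lemma Nset_iff: "n \<in> Nset F V \<delta> \<longleftrightarrow> n \<ge> 1 \<and> separates (F n) V \<delta>"
  by (simp add: Nset_def separates_def)

lemma separates_comp: "separates (g \<circ> h) V \<delta> \<longleftrightarrow> separates g (h ` V) \<delta>"
  by (auto simp: separates_def)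

lemma separates_mono: "separates g V \<delta> \<Longrightarrow> V \<subseteq> W \<Longrightarrow> separates g W \<delta>"
  by (auto simp: separates_def)

lemma separates_perturb:
  assumes "separates g V \<delta>" "\<forall>x\<in>V. dist (g x) (h x) < \<delta> / 4"
  shows "separates h V (\<delta> / 2)"
proof -
  obtain u v where "u \<in> V" "v \<in> V" "dist (g u) (g v) > \<delta>"
    using assms(1) unfolding separates_def by blast
  moreover have "dist (g u) (g v) \<le> dist (g u) (h u) + dist (h u) (h v) + dist (h v) (g v)"
    using dist_triangle[of "g u" "g v" "h u"] dist_triangle[of "h u" "g v" "h v"] by linarith
  moreover have "dist (g u) (h u) < \<delta> / 4" "dist (h v) (g v) < \<delta> / 4"
    using assms(2) \<open>u \<in> V\<close> \<open>v \<in> V\<close> by (auto simp: dist_commute)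
  ultimately have "dist (h u) (h v) > \<delta> / 2"
    by linarith
  with \<open>u \<in> V\<close> \<open>v \<in> V\<close> show ?thesis
    unfolding separates_def by blast
qed

lemma small_oscillation_subset:
  fixes g :: "'i \<Rightarrow> 'a::metric_space \<Rightarrow> 'b::metric_space"
  assumes "finite J" "\<And>j. j \<in> J \<Longrightarrow> continuous_on X (g j)"
    and "openin (top_of_set X) V" "V \<noteq> {}" "\<epsilon> > 0"
  obtains V' where "openin (top_of_set X) V'" "V' \<noteq> {}" "V' \<subseteq> V"
    "\<And>j. j \<in> J \<Longrightarrow> \<not> separates (g j) V' \<epsilon>"
proof -
  obtain x where "x \<in> V"
    using assms(4) by blast
  define V' where "V' = V \<inter> ((\<Inter>j\<in>J. X \<inter> g j -` ball (g j x) (\<epsilon> / 2)) \<inter> X)"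
  have "openin (top_of_set X) ((\<Inter>j\<in>J. X \<inter> g j -` ball (g j x) (\<epsilon> / 2)) \<inter> topspace (top_of_set X))"
    using assms(1,2) by (intro openin_INT continuous_openin_preimage_gen) auto
  then have "openin (top_of_set X) V'"
    unfolding V'_def using assms(3) by (simp add: openin_Int)
  moreover have "x \<in> V'"
    using \<open>x \<in> V\<close> assms(3,5) openin_subset unfolding V'_def by fastforce
  moreover have "\<not> separates (g j) V' \<epsilon>" if "j \<in> J" for j
  proof -
    have "dist (g j u) (g j v) \<le> \<epsilon>" if "u \<in> V'" "v \<in> V'" for u v
    proof -
      have "u \<in> g j -` ball (g j x) (\<epsilon> / 2)" "v \<in> g j -` ball (g j x) (\<epsilon> / 2)"
        using that \<open>j \<in> J\<close> unfolding V'_def by blast+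
      then have "dist (g j u) (g j x) < \<epsilon> / 2" "dist (g j v) (g j x) < \<epsilon> / 2"
        by (simp_all add: dist_commute)
      then show ?thesis
        using dist_triangle2[of "g j u" "g j v" "g j x"] by linarith
    qed
    then show ?thesis
      unfolding separates_def by (meson not_le)
  qed
  ultimately show ?thesis
    using that unfolding V'_def by blast
qed

definition separation_transfer ::
    "'a::metric_space set \<Rightarrow> (nat \<Rightarrow> 'a \<Rightarrow> 'a) \<Rightarrow> (nat \<Rightarrow> 'a \<Rightarrow> 'a) \<Rightarrow> nat \<Rightarrow> real \<Rightarrow> (nat \<Rightarrow> nat) \<Rightarrow> bool"
  where "separation_transfer X F G k \<delta> \<phi> \<longleftrightarrow>
    (\<forall>U. openin (top_of_set X) U \<and> U \<noteq> {} \<longrightarrow> (\<exists>V. openin (top_of_set X) V \<and> V \<noteq> {} \<and>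
       \<phi> ` Nset (\<lambda>n. F (k * n)) V \<delta> \<subseteq> Nset (\<lambda>n. G (k * n)) U (\<delta> / 2)))"

lemma multi_sensitive_transfer:
  assumes "multi_sensitive X F vs"
    and "\<And>\<delta>. \<delta> > 0 \<Longrightarrow> \<exists>\<phi>. \<forall>k\<in>set vs. separation_transfer X F G k \<delta> \<phi>"
  shows "multi_sensitive X G vs"
proof -
  obtain \<delta> where "\<delta> > 0" and sens: "\<forall>Us. length Us = length vs \<longrightarrow>
      (\<forall>U\<in>set Us. openin (top_of_set X) U \<and> U \<noteq> {}) \<longrightarrow>
      (\<Inter>i<length vs. Nset (\<lambda>n. F (vs ! i * n)) (Us ! i) \<delta>) \<noteq> {}"
    using assms(1) unfolding multi_sensitive_def by (elim exE conjE) (rule that)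
  then obtain \<phi> where transfer: "\<forall>k\<in>set vs. separation_transfer X F G k \<delta> \<phi>"
    using assms(2) by blast
  show ?thesis
    unfolding multi_sensitive_def
  proof (intro exI[of _ "\<delta> / 2"] conjI allI impI)
    fix Us :: "'a set list"
    assume len: "length Us = length vs" and Us: "\<forall>U\<in>set Us. openin (top_of_set X) U \<and> U \<noteq> {}"
    have "\<forall>i<length vs. \<exists>V. openin (top_of_set X) V \<and> V \<noteq> {} \<and>
        \<phi> ` Nset (\<lambda>n. F (vs ! i * n)) V \<delta> \<subseteq> Nset (\<lambda>n. G (vs ! i * n)) (Us ! i) (\<delta> / 2)"
      using transfer Us len by (simp add: separation_transfer_def nth_mem)
    then obtain V where V: "\<forall>i<length vs. openin (top_of_set X) (V i) \<and> V i \<noteq> {} \<and>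
        \<phi> ` Nset (\<lambda>n. F (vs ! i * n)) (V i) \<delta> \<subseteq> Nset (\<lambda>n. G (vs ! i * n)) (Us ! i) (\<delta> / 2)"
      by metis
    have "\<forall>U\<in>set (map V [0..<length vs]). openin (top_of_set X) U \<and> U \<noteq> {}"
      using V by auto
    then have "(\<Inter>i<length vs. Nset (\<lambda>n. F (vs ! i * n)) (V i) \<delta>) \<noteq> {}"
      using sens[rule_format, of "map V [0..<length vs]"] by auto
    then obtain n where "n \<in> (\<Inter>i<length vs. Nset (\<lambda>n. F (vs ! i * n)) (V i) \<delta>)"
      by blast
    with V have "\<phi> n \<in> (\<Inter>i<length vs. Nset (\<lambda>n. G (vs ! i * n)) (Us ! i) (\<delta> / 2))"
      by blast
    then show "(\<Inter>i<length vs. Nset (\<lambda>n. G (vs ! i * n)) (Us ! i) (\<delta> / 2)) \<noteq> {}"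
      by blast
  qed (use \<open>\<delta> > 0\<close> in simp)
qed

lemma limit_separation_to_nonautonomous:
  assumes f: "continuous_on X f" "f ` X = X"
    and tail: "\<forall>m. \<forall>x\<in>X. dist (ncomp fs (Suc s) m x) ((f ^^ m) x) < \<delta> / 4"
    and "feebly_open X fs" "openin (top_of_set X) U" "U \<noteq> {}" "\<delta> > 0"
  obtains V where "openin (top_of_set X) V" "V \<noteq> {}"
    "\<And>j. separates (f ^^ j) V \<delta> \<Longrightarrow> separates (ncomp fs 1 j) U (\<delta> / 2)"
proof -
  let ?W = "top_of_set X interior_of (ncomp fs 1 s ` U)"
  have "openin (top_of_set X) (X \<inter> (f ^^ s) -` ?W) \<and> X \<inter> (f ^^ s) -` ?W \<noteq> {}"
    using interior_of_ncomp_image_nonempty[OF assms(4-6)] funpow_continuous_surj[OF f]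
    by (intro openin_vimage_surj) auto
  then obtain V where V: "openin (top_of_set X) V" "V \<noteq> {}" "V \<subseteq> X \<inter> (f ^^ s) -` ?W"
    and short: "\<And>j. j \<in> {..s} \<Longrightarrow> \<not> separates (f ^^ j) V \<delta>"
    using small_oscillation_subset[of "{..s}" X "\<lambda>j. f ^^ j"] funpow_continuous_surj[OF f] \<open>\<delta> > 0\<close>
    by (metis finite_atMost)
  have "separates (ncomp fs 1 j) U (\<delta> / 2)" if sep: "separates (f ^^ j) V \<delta>" for j
  proof -
    obtain m where j: "j = s + m"
      using short[of j] sep by (metis atMost_iff le_iff_add nat_le_linear)
    have "separates (f ^^ m) ((f ^^ s) ` V) \<delta>"
      using sep by (simp add: j funpow_add separates_comp add.commute)
    moreover have "(f ^^ s) ` V \<subseteq> ?W" "?W \<subseteq> X"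
      using V(3) interior_of_subset_topspace[of "top_of_set X"] by auto
    ultimately have "separates (ncomp fs (Suc s) m) ((f ^^ s) ` V) (\<delta> / 2)"
      using tail by (intro separates_perturb) (auto simp: dist_commute)
    then have "separates (ncomp fs (Suc s) m) (ncomp fs 1 s ` U) (\<delta> / 2)"
      using \<open>(f ^^ s) ` V \<subseteq> ?W\<close> interior_of_subset[of "top_of_set X"]
      by (elim separates_mono) blast
    then show ?thesis
      by (simp add: j ncomp_add separates_comp)
  qed
  with V that show ?thesis
    by blast
qed

lemma nonautonomous_separation_to_limit:
  assumes fs: "\<And>n. n \<ge> 1 \<Longrightarrow> continuous_on X (fs n) \<and> fs n ` X = X"
    and f: "continuous_on X f" "f ` X = X"
    and tail: "\<forall>m. \<forall>x\<in>X. dist (ncomp fs (Suc s) m x) ((f ^^ m) x) < \<delta> / 4"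
    and "k \<ge> 1" "openin (top_of_set X) U" "U \<noteq> {}" "\<delta> > 0"
  obtains V where "openin (top_of_set X) V" "V \<noteq> {}"
    "\<And>n. separates (ncomp fs 1 (k * n)) V \<delta> \<Longrightarrow> s < n \<and> separates (f ^^ (k * (n - s))) U (\<delta> / 2)"
proof -
  let ?t = "s * (k - 1)"
  have fs_iter: "continuous_on X (ncomp fs 1 j) \<and> ncomp fs 1 j ` X = X" for j
    using fs by (rule ncomp_continuous_surj)
  have "openin (top_of_set X) (X \<inter> (f ^^ ?t) -` U) \<and> X \<inter> (f ^^ ?t) -` U \<noteq> {}"
    using funpow_continuous_surj[OF f] assms(6,7) by (intro openin_vimage_surj) auto
  then have "openin (top_of_set X) (X \<inter> ncomp fs 1 s -` (X \<inter> (f ^^ ?t) -` U))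
      \<and> X \<inter> ncomp fs 1 s -` (X \<inter> (f ^^ ?t) -` U) \<noteq> {}"
    using fs_iter by (intro openin_vimage_surj) auto
  then obtain V where V: "openin (top_of_set X) V" "V \<noteq> {}"
      "V \<subseteq> X \<inter> ncomp fs 1 s -` (X \<inter> (f ^^ ?t) -` U)"
    and short: "\<And>j. j \<in> {..s * k} \<Longrightarrow> \<not> separates (ncomp fs 1 j) V \<delta>"
    using small_oscillation_subset[of "{..s * k}" X "ncomp fs 1"] fs_iter \<open>\<delta> > 0\<close>
    by (metis finite_atMost)
  have "s < n \<and> separates (f ^^ (k * (n - s))) U (\<delta> / 2)"
    if sep: "separates (ncomp fs 1 (k * n)) V \<delta>" for n
  proof -
    have "s * k < k * n"
      using short[of "k * n"] sep by (meson atMost_iff not_le)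
    then have "s < n"
      by simp
    \<comment> \<open>k n = s + m, and f^m factors as f^{k(n-s)} after f^t, which carries f_1^s V into U\<close>
    define m where "m = k * (n - s) + ?t"
    obtain p where "k = Suc p"
      using \<open>k \<ge> 1\<close> by (cases k) auto
    moreover obtain q where "n = s + q"
      using \<open>s < n\<close> by (metis less_imp_le le_add_diff_inverse)
    ultimately have kn: "k * n = s + m"
      by (simp add: m_def algebra_simps)
    have "separates (ncomp fs (Suc s) m) (ncomp fs 1 s ` V) \<delta>"
      using sep by (simp add: kn ncomp_add separates_comp)
    moreover have "ncomp fs 1 s ` V \<subseteq> X"
      using V(3) by auto
    ultimately have "separates (f ^^ m) (ncomp fs 1 s ` V) (\<delta> / 2)"
      using tail by (intro separates_perturb) auto
    then have "separates (f ^^ (k * (n - s))) ((f ^^ ?t) ` ncomp fs 1 s ` V) (\<delta> / 2)"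
      by (simp add: m_def funpow_add separates_comp)
    moreover have "(f ^^ ?t) ` ncomp fs 1 s ` V \<subseteq> U"
      using V(3) by auto
    ultimately show ?thesis
      using \<open>s < n\<close> by (simp add: separates_mono)
  qed
  with V that show ?thesis
    by blast
qed

lemma multi_sensitive_nonautonomous_if_limit:
  assumes f: "continuous_on X f" "f ` X = X"
    and tail: "\<And>e. e > 0 \<Longrightarrow> \<exists>s. \<forall>m. \<forall>x\<in>X. dist (ncomp fs (Suc s) m x) ((f ^^ m) x) < e"
    and "feebly_open X fs" "multi_sensitive X (\<lambda>n. f ^^ n) vs"
  shows "multi_sensitive X (ncomp fs 1) vs"
  using assms(5)
proof (rule multi_sensitive_transfer)
  fix \<delta> :: real
  assume "\<delta> > 0"
  then obtain s where s: "\<forall>m. \<forall>x\<in>X. dist (ncomp fs (Suc s) m x) ((f ^^ m) x) < \<delta> / 4"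
    using tail[of "\<delta> / 4"] by auto
  have "separation_transfer X (\<lambda>n. f ^^ n) (ncomp fs 1) k \<delta> id" for k
    unfolding separation_transfer_def
  proof (intro allI impI)
    fix U assume "openin (top_of_set X) U \<and> U \<noteq> {}"
    then obtain V where "openin (top_of_set X) V" "V \<noteq> {}"
      and V: "\<And>j. separates (f ^^ j) V \<delta> \<Longrightarrow> separates (ncomp fs 1 j) U (\<delta> / 2)"
      using limit_separation_to_nonautonomous[OF f s \<open>feebly_open X fs\<close> _ _ \<open>\<delta> > 0\<close>] by blast
    moreover have "id ` Nset (\<lambda>n. f ^^ (k * n)) V \<delta> \<subseteq> Nset (\<lambda>n. ncomp fs 1 (k * n)) U (\<delta> / 2)"
      using V by (auto simp: Nset_iff)
    ultimately show "\<exists>V. openin (top_of_set X) V \<and> V \<noteq> {} \<and>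
        id ` Nset (\<lambda>n. f ^^ (k * n)) V \<delta> \<subseteq> Nset (\<lambda>n. ncomp fs 1 (k * n)) U (\<delta> / 2)"
      by blast
  qed
  then show "\<exists>\<phi>. \<forall>k\<in>set vs. separation_transfer X (\<lambda>n. f ^^ n) (ncomp fs 1) k \<delta> \<phi>"
    by blast
qed

lemma multi_sensitive_limit_if_nonautonomous:
  assumes fs: "\<And>n. n \<ge> 1 \<Longrightarrow> continuous_on X (fs n) \<and> fs n ` X = X"
    and f: "continuous_on X f" "f ` X = X"
    and tail: "\<And>e. e > 0 \<Longrightarrow> \<exists>s. \<forall>m. \<forall>x\<in>X. dist (ncomp fs (Suc s) m x) ((f ^^ m) x) < e"
    and "\<forall>k\<in>set vs. k \<ge> 1" "multi_sensitive X (ncomp fs 1) vs"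
  shows "multi_sensitive X (\<lambda>n. f ^^ n) vs"
  using assms(6)
proof (rule multi_sensitive_transfer)
  fix \<delta> :: real
  assume "\<delta> > 0"
  then obtain s where s: "\<forall>m. \<forall>x\<in>X. dist (ncomp fs (Suc s) m x) ((f ^^ m) x) < \<delta> / 4"
    using tail[of "\<delta> / 4"] by auto
  have "separation_transfer X (ncomp fs 1) (\<lambda>n. f ^^ n) k \<delta> (\<lambda>n. n - s)" if "k \<ge> 1" for k
    unfolding separation_transfer_def
  proof (intro allI impI)
    fix U assume "openin (top_of_set X) U \<and> U \<noteq> {}"
    then obtain V where "openin (top_of_set X) V" "V \<noteq> {}"
      and V: "\<And>n. separates (ncomp fs 1 (k * n)) V \<delta> \<Longrightarrow> s < n \<and> separates (f ^^ (k * (n - s))) U (\<delta> / 2)"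
      using nonautonomous_separation_to_limit[OF fs f s \<open>k \<ge> 1\<close> _ _ \<open>\<delta> > 0\<close>] by blast
    moreover have "n - s \<in> Nset (\<lambda>n. f ^^ (k * n)) U (\<delta> / 2)"
      if "n \<in> Nset (\<lambda>n. ncomp fs 1 (k * n)) V \<delta>" for n
      using V[of n] that by (auto simp: Nset_iff)
    ultimately show "\<exists>V. openin (top_of_set X) V \<and> V \<noteq> {} \<and>
        (\<lambda>n. n - s) ` Nset (\<lambda>n. ncomp fs 1 (k * n)) V \<delta> \<subseteq> Nset (\<lambda>n. f ^^ (k * n)) U (\<delta> / 2)"
      by blast
  qed
  with assms(5) show "\<exists>\<phi>. \<forall>k\<in>set vs. separation_transfer X (ncomp fs 1) (\<lambda>n. f ^^ n) k \<delta> \<phi>"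
    by blast
qed

theorem mainTheorem7:
  fixes X :: "'a::metric_space set" and fs :: "nat \<Rightarrow> 'a \<Rightarrow> 'a" and f :: "'a \<Rightarrow> 'a"
  assumes "compact X"
    and "\<And>n. n \<ge> 1 \<Longrightarrow> continuous_on X (fs n) \<and> fs n ` X = X"
    and "f ` X \<subseteq> X"
    and "\<forall>e>0. \<exists>N0. \<forall>n\<ge>N0. n \<ge> 1 \<longrightarrow> (\<forall>x\<in>X. dist (fs n x) (f x) < e)"
    and "\<forall>e>0. \<exists>N0. \<forall>N\<ge>N0. N \<ge> 1 \<longrightarrow> (\<forall>k. supdist X (ncomp fs N k) (f ^^ k) < e)"
    and "feebly_open X fs"
  shows "(strongly_multi_sensitive X (ncomp fs 1) \<longleftrightarrow> strongly_multi_sensitive X (\<lambda>n. f ^^ n))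
       \<and> (N_sensitive X (ncomp fs 1) \<longleftrightarrow> N_sensitive X (\<lambda>n. f ^^ n))"
proof -
  have eventually_fs: "\<forall>\<^sub>F n in sequentially. continuous_on X (fs n) \<and> fs n ` X = X"
    using assms(2) eventually_sequentially by blast
  have uniform: "uniform_limit X fs f sequentially"
    using assms(4) unfolding uniform_limit_sequentially_iff by (meson le_trans nat_le_linear)
  have f_cont: "continuous_on X f"
    using eventually_fs uniform by (auto intro: uniform_limit_theorem elim: eventually_mono)
  have "X \<subseteq> f ` X"
    using eventually_fs
    by (intro uniform_limit_image_supset[OF assms(1) f_cont uniform sequentially_bot])
      (auto elim: eventually_mono)
  with assms(3) have f_surj: "f ` X = X"
    by blast
  have tail: "\<And>e. e > 0 \<Longrightarrow> \<exists>s. \<forall>m. \<forall>x\<in>X. dist (ncomp fs (Suc s) m x) ((f ^^ m) x) < e"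
    using collective_convergence_tail[OF assms(1,2) f_cont f_surj assms(5)] .
  have "multi_sensitive X (ncomp fs 1) vs \<longleftrightarrow> multi_sensitive X (\<lambda>n. f ^^ n) vs"
    if "\<forall>k\<in>set vs. k \<ge> 1" for vs
    using multi_sensitive_nonautonomous_if_limit[OF f_cont f_surj tail assms(6)]
      multi_sensitive_limit_if_nonautonomous[OF assms(2) f_cont f_surj tail that] by blast
  then show ?thesis
    unfolding strongly_multi_sensitive_def N_sensitive_def by auto
qed

end
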